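(* Let $\Omega\subset\mathbb{R}^N$ be a bounded open set, $r>0$, $L>0$, $M_0\in\mathbb{N}$, $\omega$ a modulus of continuity, and let $K\in\mathcal{FR}(r,L,M_0,\omega)$ with a given decomposition. Then for every $x\in K$ and every $\bar r>0$ there exist $\bar s>0$, depending only on $r,L,M_0,\omega,\bar r$, and $y\in B_{\bar r/2}(x)\cap K$ such that $\mathrm{dist}(y,\mathrm{sing}(K))\ge\bar s$.
   Context: A modulus of continuity is a non-decreasing left-continuous $\omega:(0,\infty)\to(0,\infty)$ with $\omega(0^+)=0$. Let $\pi=\{y_N=0\}$, $\pi^+=\{y\in\pi:y_{N-1}\ge0\}$. A nonempty compact $K\subset\overline\Omega$ is a Lipschitz hypersurface with constants $r,L$ if for each $x\in K$ there is $\Phi_x:B_r(x)\to\mathbb{R}^N$ with $L^{-1}|z_1-z_2|\le|\Phi_x(z_1)-\Phi_x(z_2)|\le L|z_1-z_2|$, $\Phi_x(x)=0$, $\Phi_x(K\cap B_r(x))\subset\pi$; $x$ is interior if $B_\delta(0)\cap\pi\subset\Phi_x(K\cap B_r(x))$ for some $\delta>0$; $\mathrm{bdry}(K)$ = non-interior points. $\mathcal{MR}(r,L)$: such $K$ with $\Phi_x(K\cap B_r(x))=\Phi_x(B_r(x))\cap\pi^+$ for $x\in\mathrm{bdry}(K)$. $\mathcal{FR}(r,L,M_0)$: Lipschitz hypersurfaces with constants $r,L$ of the form $\bigcup_{j=1}^JH^j$, $H^j\in\mathcal{MR}(r,L)$, $J\le M_0$, with $\mathrm{sing}=\bigcup_j\mathrm{bdry}(H^j)$.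 $K\in\mathcal{FR}(r,L,M_0,\omega)$ if $K=\bigcup_{i=1}^MK^i$, $K^i\in\mathcal{FR}(r,L,M_0)$ with chosen decompositions, such that for each $i$ and $x\in K^i$ with $\mathrm{dist}(x,\mathrm{sing}(K^i))=\delta>0$, $\mathrm{dist}(x,\bigcup_{j\ne i}K^j)\ge\omega(\delta)$; $\mathrm{sing}(K)=\bigcup_i\mathrm{sing}(K^i)$. *)

theory Defs
  imports "HOL-Analysis.Analysis"
begin

text \<open>Ambient space R^N is modelled as (real,'n) vec with a linearly ordered finite index
  type 'n; the N-th coordinate is the largest index, the (N-1)-th the second largest.\<close>

definition idxN :: "'n::{finite,linorder}" where
  "idxN = Max UNIV"

definition idxN1 :: "'n::{finite,linorder}" where
  "idxN1 = Max (UNIV - {idxN})"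

definition piN :: "((real,'n::{finite,linorder}) vec) set" where
  "piN = {y. y $ idxN = 0}"

definition piN_plus :: "((real,'n::{finite,linorder}) vec) set" where
  "piN_plus = {y \<in> piN. y $ idxN1 \<ge> 0}"

definition modulus_of_continuity :: "(real \<Rightarrow> real) \<Rightarrow> bool" where
  "modulus_of_continuity \<omega> \<longleftrightarrow>
     (\<forall>t>0. \<omega> t > 0) \<and>
     (\<forall>s t. 0 < s \<longrightarrow> s \<le> t \<longrightarrow> \<omega> s \<le> \<omega> t) \<and>
     (\<forall>t>0. (\<omega> \<longlongrightarrow> \<omega> t) (at_left t)) \<and>
     (\<omega> \<longlongrightarrow> 0) (at_right 0)"

definition lip_chart ::
  "real \<Rightarrow> real \<Rightarrow> ((real,'n::{finite,linorder}) vec) set \<Rightarrow> (real,'n) vec \<Rightarrow> ((real,'n) vec \<Rightarrow> (real,'n) vec) \<Rightarrow> bool" where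
  "lip_chart r L K x \<Phi> \<longleftrightarrow>
     (\<forall>z1\<in>ball x r. \<forall>z2\<in>ball x r.
        dist z1 z2 / L \<le> dist (\<Phi> z1) (\<Phi> z2) \<and> dist (\<Phi> z1) (\<Phi> z2) \<le> L * dist z1 z2) \<and>
     \<Phi> x = 0 \<and> \<Phi> ` (K \<inter> ball x r) \<subseteq> piN"

definition lip_hypersurface ::
  "((real,'n::{finite,linorder}) vec) set \<Rightarrow> real \<Rightarrow> real \<Rightarrow> ((real,'n) vec) set \<Rightarrow> bool" where
  "lip_hypersurface \<Omega> r L K \<longleftrightarrow>
     K \<noteq> {} \<and> compact K \<and> K \<subseteq> closure \<Omega> \<and> (\<forall>x\<in>K. \<exists>\<Phi>. lip_chart r L K x \<Phi>)"

definition interior_pt ::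
  "real \<Rightarrow> real \<Rightarrow> ((real,'n::{finite,linorder}) vec) set \<Rightarrow> (real,'n) vec \<Rightarrow> bool" where
  "interior_pt r L K x \<longleftrightarrow>
     (\<exists>\<Phi>. lip_chart r L K x \<Phi> \<and> (\<exists>\<delta>>0. ball 0 \<delta> \<inter> piN \<subseteq> \<Phi> ` (K \<inter> ball x r)))"

definition bdry ::
  "real \<Rightarrow> real \<Rightarrow> ((real,'n::{finite,linorder}) vec) set \<Rightarrow> ((real,'n) vec) set" where
  "bdry r L K = {x \<in> K. \<not> interior_pt r L K x}"

definition MR ::
  "((real,'n::{finite,linorder}) vec) set \<Rightarrow> real \<Rightarrow> real \<Rightarrow> ((real,'n) vec) set \<Rightarrow> bool" where
  "MR \<Omega> r L K \<longleftrightarrow> lip_hypersurface \<Omega> r L K \<and>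
     (\<forall>x\<in>bdry r L K. \<exists>\<Phi>. lip_chart r L K x \<Phi> \<and>
        \<Phi> ` (K \<inter> ball x r) = \<Phi> ` (ball x r) \<inter> piN_plus)"

text \<open>FR(r,L,M0) with a chosen decomposition, given as the list Hs of pieces H^j.\<close>
definition FR ::
  "((real,'n::{finite,linorder}) vec) set \<Rightarrow> real \<Rightarrow> real \<Rightarrow> nat \<Rightarrow> ((real,'n) vec) set list \<Rightarrow> bool" where
  "FR \<Omega> r L M0 Hs \<longleftrightarrow> lip_hypersurface \<Omega> r L (\<Union>(set Hs)) \<and>
     length Hs \<le> M0 \<and> (\<forall>H\<in>set Hs. MR \<Omega> r L H)"

definition sing_FR :: "real \<Rightarrow> real \<Rightarrow> ((real,'n::{finite,linorder}) vec) set list \<Rightarrow> ((real,'n) vec) set" where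
  "sing_FR r L Hs = (\<Union>H\<in>set Hs. bdry r L H)"

text \<open>FR(r,L,M0,omega) with a chosen decomposition D: K^i = \<Union> set (D!i).
  The separation condition dist(x, sing K^i) = delta > 0 ==> dist(x, other K^j) >= omega delta
  is written with pointwise distances (distance to the empty set = +infinity).\<close>
definition FR_omega ::
  "((real,'n::{finite,linorder}) vec) set \<Rightarrow> real \<Rightarrow> real \<Rightarrow> nat \<Rightarrow> (real \<Rightarrow> real) \<Rightarrow>
   ((real,'n) vec) set list list \<Rightarrow> bool" where
  "FR_omega \<Omega> r L M0 \<omega> D \<longleftrightarrow> D \<noteq> [] \<and>
     (\<forall>i<length D. FR \<Omega> r L M0 (D!i)) \<and>
     (\<forall>i<length D. \<forall>x\<in>\<Union>(set (D!i)). \<forall>\<delta>>0.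
        (\<forall>z\<in>sing_FR r L (D!i). \<delta> \<le> dist x z) \<longrightarrow>
        (\<forall>j<length D. j \<noteq> i \<longrightarrow> (\<forall>z\<in>\<Union>(set (D!j)). \<omega> \<delta> \<le> dist x z)))"

definition K_of :: "((real,'n::{finite,linorder}) vec) set list list \<Rightarrow> ((real,'n) vec) set" where
  "K_of D = (\<Union>Hs\<in>set D. \<Union>(set Hs))"

definition sing_K :: "real \<Rightarrow> real \<Rightarrow> ((real,'n::{finite,linorder}) vec) set list list \<Rightarrow> ((real,'n) vec) set" where
  "sing_K r L D = (\<Union>Hs\<in>set D. sing_FR r L Hs)"

end

theory Submission
  imports Defs
begin

text \<open>Near a boundary point q of a piece H, the chart at q maps H onto a half-disc of the hyperplane
  \<open>piN\<close>. Pulling back a flat disc that lies strictly inside the half-disc gives a point of H whose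
  distance to bdry(H) is comparable to its distance to q: a boundary point closer than that would,
  by invariance of domain, be an interior point. Doing this in turn for the at most \<open>M\<^sub>0\<close> pieces of
  the component \<open>K\<^sup>i\<close> containing x, at geometrically decreasing scales, moves x by less than
  \<open>rb/2\<close> to a point y at a uniform distance \<open>\<delta>\<close> from \<open>sing(K\<^sup>i)\<close>; the separation condition then keeps y
  at distance \<open>\<omega>(\<delta>)\<close> from the other components, hence from \<open>sing(K)\<close>.\<close>

definition bilipschitz_on :: "real \<Rightarrow> 'a::metric_space set \<Rightarrow> ('a \<Rightarrow> 'b::metric_space) \<Rightarrow> bool" where
  "bilipschitz_on L U f \<longleftrightarrow>
     (\<forall>u\<in>U. \<forall>v\<in>U. dist u v / L \<le> dist (f u) (f v) \<and> dist (f u) (f v) \<le> L * dist u v)"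

lemma lip_chart_iff:
  "lip_chart r L K x \<Phi> \<longleftrightarrow>
     bilipschitz_on L (ball x r) \<Phi> \<and> \<Phi> x = 0 \<and> \<Phi> ` (K \<inter> ball x r) \<subseteq> piN"
  by (simp add: lip_chart_def bilipschitz_on_def)

lemma bilipschitz_on_subset: "bilipschitz_on L U f \<Longrightarrow> V \<subseteq> U \<Longrightarrow> bilipschitz_on L V f"
  by (auto simp: bilipschitz_on_def)

lemma bilipschitz_onD:
  assumes "bilipschitz_on L U f" "u \<in> U" "v \<in> U"
  shows "dist (f u) (f v) \<le> L * dist u v"
  using assms by (auto simp: bilipschitz_on_def)

lemma bilipschitz_onD_lower:
  assumes "bilipschitz_on L U f" "L > 0" "u \<in> U" "v \<in> U"
  shows "dist u v \<le> L * dist (f u) (f v)"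
  using assms by (auto simp: bilipschitz_on_def field_simps)

lemma bilipschitz_on_continuous_on:
  assumes "bilipschitz_on L U f" "L > 0"
  shows "continuous_on U f"
  using assms by (intro lipschitz_on_continuous_on[of L] lipschitz_onI) (auto simp: bilipschitz_onD)

lemma bilipschitz_on_inj_on:
  assumes "bilipschitz_on L U f" "L > 0"
  shows "inj_on f U"
  by (rule inj_onI) (use bilipschitz_onD_lower[OF assms] in fastforce)

lemma bilipschitz_on_ge_one:
  assumes "bilipschitz_on L U f" "L > 0" "u \<in> U" "v \<in> U" "u \<noteq> v"
  shows "1 \<le> L"
proof -
  have "dist u v / L \<le> L * dist u v"
    using assms(1,3,4) by (auto simp: bilipschitz_on_def intro: order_trans)
  then have "1\<^sup>2 \<le> L\<^sup>2"
    using assms by (simp add: field_simps power2_eq_square)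
  then show ?thesis
    using power2_le_imp_le[of 1 L] assms(2) by simp
qed

lemma bilipschitz_on_compose:
  assumes f: "bilipschitz_on L U f" and g: "bilipschitz_on M V g" and "f ` U \<subseteq> V" "L > 0" "M > 0"
  shows "bilipschitz_on (L * M) U (g \<circ> f)"
  unfolding bilipschitz_on_def
proof (intro ballI conjI)
  fix u v assume uv: "u \<in> U" "v \<in> U"
  then have fuv: "f u \<in> V" "f v \<in> V"
    using assms(3) by auto
  have "dist u v / (L * M) \<le> dist (f u) (f v) / M"
    using f uv \<open>M > 0\<close> by (auto simp: bilipschitz_on_def divide_right_mono simp flip: divide_divide_eq_left)
  also have "\<dots> \<le> dist ((g \<circ> f) u) ((g \<circ> f) v)"
    using g fuv by (auto simp: bilipschitz_on_def)
  finally show "dist u v / (L * M) \<le> dist ((g \<circ> f) u) ((g \<circ> f) v)" .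
  have "dist ((g \<circ> f) u) ((g \<circ> f) v) \<le> M * dist (f u) (f v)"
    using g fuv by (auto simp: bilipschitz_on_def)
  also have "\<dots> \<le> M * (L * dist u v)"
    using bilipschitz_onD[OF f uv] \<open>M > 0\<close> by simp
  finally show "dist ((g \<circ> f) u) ((g \<circ> f) v) \<le> L * M * dist u v"
    by (simp add: ac_simps)
qed

lemma bilipschitz_on_inv_into:
  assumes f: "bilipschitz_on L U f" and "L > 0"
  shows "bilipschitz_on L (f ` U) (inv_into U f)"
  unfolding bilipschitz_on_def
proof (intro ballI)
  fix fu fv assume "fu \<in> f ` U" "fv \<in> f ` U"
  then obtain u v where uv: "u \<in> U" "v \<in> U" "fu = f u" "fv = f v"
    by auto
  then have "inv_into U f fu = u" "inv_into U f fv = v"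
    using bilipschitz_on_inj_on[OF assms] by auto
  then show "dist fu fv / L \<le> dist (inv_into U f fu) (inv_into U f fv) \<and>
      dist (inv_into U f fu) (inv_into U f fv) \<le> L * dist fu fv"
    using bilipschitz_onD[OF f uv(1,2)] bilipschitz_onD_lower[OF assms uv(1,2)] \<open>L > 0\<close> uv
    by (simp add: field_simps)
qed

lemma subspace_co_lipschitz_image_openin:
  fixes f :: "'a::euclidean_space \<Rightarrow> 'a"
  assumes "subspace S" "openin (top_of_set S) U" "f ` U \<subseteq> S" "continuous_on U f"
    and co_lip: "\<And>u v. u \<in> U \<Longrightarrow> v \<in> U \<Longrightarrow> dist u v \<le> C * dist (f u) (f v)"
  shows "openin (top_of_set S) (f ` U)"
proof (rule invariance_of_domain_subspaces[OF assms(2,1,1) order_refl assms(4)])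
  show "f \<in> U \<rightarrow> S"
    using assms(3) by auto
  show "inj_on f U"
  proof (rule inj_onI)
    fix u v assume "u \<in> U" "v \<in> U" "f u = f v"
    then show "u = v"
      using co_lip[of u v] by simp
  qed
qed

lemma co_lipschitz_image_ball_closedin:
  fixes f :: "'a::euclidean_space \<Rightarrow> 'a"
  assumes "closed S" "\<rho> > 0" "C > 0"
    and co_lip: "\<And>u. u \<in> S \<inter> cball a \<rho> \<Longrightarrow> dist a u \<le> C * dist (f a) (f u)"
    and cont: "continuous_on (S \<inter> cball a \<rho>) f"
  shows "closedin (top_of_set (S \<inter> ball (f a) (\<rho> / C))) (S \<inter> ball (f a) (\<rho> / C) \<inter> f ` (S \<inter> ball a \<rho>))"
proof -
  have "u \<in> ball a \<rho>" if "u \<in> S \<inter> cball a \<rho>" "f u \<in> ball (f a) (\<rho> / C)" for u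
  proof -
    have "dist a u \<le> C * dist (f a) (f u)"
      using co_lip that(1) .
    also have "\<dots> < \<rho>"
      using that(2) \<open>C > 0\<close> by (simp add: field_simps)
    finally show ?thesis
      by simp
  qed
  then have "S \<inter> ball (f a) (\<rho> / C) \<inter> f ` (S \<inter> ball a \<rho>) = S \<inter> ball (f a) (\<rho> / C) \<inter> f ` (S \<inter> cball a \<rho>)"
    by auto
  moreover have "compact (f ` (S \<inter> cball a \<rho>))"
    by (intro compact_continuous_image cont closed_Int_compact compact_cball \<open>closed S\<close>)
  ultimately show ?thesis
    by (simp add: closedin_closed_Int compact_imp_closed)
qed

text \<open>The connected set V meets the image of the open ball in a relatively clopen set.\<close>
lemma subspace_ball_subset_co_lipschitz_image_cball:
  fixes f :: "'a::euclidean_space \<Rightarrow> 'a"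
  assumes S: "subspace S" and a: "a \<in> S" and "\<rho> > 0" "C > 0"
    and fS: "f ` (S \<inter> cball a \<rho>) \<subseteq> S"
    and co_lip: "\<And>u v. u \<in> S \<inter> cball a \<rho> \<Longrightarrow> v \<in> S \<inter> cball a \<rho> \<Longrightarrow> dist u v \<le> C * dist (f u) (f v)"
    and cont: "continuous_on (S \<inter> cball a \<rho>) f"
  shows "S \<inter> ball (f a) (\<rho> / C) \<subseteq> f ` (S \<inter> ball a \<rho>)"
proof -
  define V where "V = S \<inter> ball (f a) (\<rho> / C)"
  define A where "A = V \<inter> f ` (S \<inter> ball a \<rho>)"
  have "openin (top_of_set S) (f ` (S \<inter> ball a \<rho>))"
  proof (rule subspace_co_lipschitz_image_openin[OF S])
    show "openin (top_of_set S) (S \<inter> ball a \<rho>)"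
      by auto
    show "f ` (S \<inter> ball a \<rho>) \<subseteq> S"
      using fS by auto
    show "continuous_on (S \<inter> ball a \<rho>) f"
      using cont by (rule continuous_on_subset) auto
    show "dist u v \<le> C * dist (f u) (f v)" if "u \<in> S \<inter> ball a \<rho>" "v \<in> S \<inter> ball a \<rho>" for u v
      using co_lip[of u v] that by auto
  qed
  then obtain U where "open U" "f ` (S \<inter> ball a \<rho>) = S \<inter> U"
    by (auto simp: openin_open)
  then have "A = V \<inter> U"
    by (auto simp: A_def V_def)
  have co_lip_a: "dist a u \<le> C * dist (f a) (f u)" if "u \<in> S \<inter> cball a \<rho>" for u
    using co_lip[of a u] a \<open>\<rho> > 0\<close> that by simp
  have "openin (top_of_set V) A"
    using \<open>A = V \<inter> U\<close> \<open>open U\<close> by (simp add: openin_open_Int)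
  moreover have "closedin (top_of_set V) A"
    unfolding A_def V_def using co_lip_a
    by (rule co_lipschitz_image_ball_closedin[OF closed_subspace[OF S] \<open>\<rho> > 0\<close> \<open>C > 0\<close> _ cont])
  moreover have "f a \<in> A"
    using fS a \<open>\<rho> > 0\<close> \<open>C > 0\<close> unfolding A_def V_def by auto
  moreover have "connected V"
    unfolding V_def by (intro convex_connected convex_Int subspace_imp_convex S convex_ball)
  ultimately have "A = V"
    using connected_clopen by blast
  then show ?thesis
    unfolding A_def V_def by blast
qed

lemma subspace_ball_subset_co_lipschitz_image:
  fixes f :: "'a::euclidean_space \<Rightarrow> 'a"
  assumes S: "subspace S" and a: "a \<in> S" and "t > 0" "C > 0"
    and fS: "f ` (S \<inter> ball a t) \<subseteq> S"
    and co_lip: "\<And>u v. u \<in> S \<inter> ball a t \<Longrightarrow> v \<in> S \<inter> ball a t \<Longrightarrow> dist u v \<le> C * dist (f u) (f v)"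
    and cont: "continuous_on (S \<inter> ball a t) f"
  shows "S \<inter> ball (f a) (t / C) \<subseteq> f ` (S \<inter> ball a t)"
proof
  fix w assume w: "w \<in> S \<inter> ball (f a) (t / C)"
  define \<rho> where "\<rho> = (t + C * dist (f a) w) / 2"
  have "C * dist (f a) w < t"
    using w \<open>C > 0\<close> by (auto simp: field_simps)
  then have "\<rho> < t" "dist (f a) w < \<rho> / C" "\<rho> > 0"
    using \<open>C > 0\<close> \<open>t > 0\<close> by (auto simp: \<rho>_def field_simps add_pos_nonneg)
  then have sub: "S \<inter> cball a \<rho> \<subseteq> S \<inter> ball a t"
    by auto
  have "S \<inter> ball (f a) (\<rho> / C) \<subseteq> f ` (S \<inter> ball a \<rho>)"
  proof (rule subspace_ball_subset_co_lipschitz_image_cball[OF S a \<open>\<rho> > 0\<close> \<open>C > 0\<close>])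
    show "f ` (S \<inter> cball a \<rho>) \<subseteq> S"
      using fS sub by blast
    show "dist u v \<le> C * dist (f u) (f v)" if "u \<in> S \<inter> cball a \<rho>" "v \<in> S \<inter> cball a \<rho>" for u v
      using co_lip that sub by blast
    show "continuous_on (S \<inter> cball a \<rho>) f"
      using cont sub by (rule continuous_on_subset)
  qed
  then show "w \<in> f ` (S \<inter> ball a t)"
    using w \<open>dist (f a) w < \<rho> / C\<close> \<open>\<rho> < t\<close> by auto
qed

lemma subspace_piN: "subspace piN"
  unfolding subspace_def piN_def by auto

lemma idxN1_neq_idxN:
  assumes "CARD('n::{finite,linorder}) \<ge> 2"
  shows "(idxN1::'n) \<noteq> idxN"
proof -
  have "UNIV - {idxN::'n} \<noteq> {}"
  proof
    assume "UNIV - {idxN::'n} = {}"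
    then have "CARD('n) \<le> card {idxN::'n}"
      by (intro card_mono) blast+
    then show False
      using assms by simp
  qed
  then have "Max (UNIV - {idxN::'n}) \<in> UNIV - {idxN}"
    by (intro Max_in) auto
  then show ?thesis
    by (simp add: idxN1_def)
qed

lemma axis_idxN1_in_piN:
  assumes "CARD('n::{finite,linorder}) \<ge> 2"
  shows "axis (idxN1::'n) (1::real) \<in> piN"
  using idxN1_neq_idxN[OF assms] by (simp add: piN_def axis_def)

lemma piN_ball_axis_subset_piN_plus:
  "piN \<inter> ball (\<tau> *\<^sub>R axis (idxN1::'n::{finite,linorder}) 1) \<tau> \<subseteq> piN_plus"
proof
  fix w assume w: "w \<in> piN \<inter> ball (\<tau> *\<^sub>R axis (idxN1::'n) 1) \<tau>"
  have "\<tau> - w $ idxN1 \<le> norm (\<tau> *\<^sub>R axis idxN1 1 - w)"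
    using component_le_norm_cart[of "\<tau> *\<^sub>R axis idxN1 1 - w" idxN1] by simp
  moreover have "norm (\<tau> *\<^sub>R axis idxN1 1 - w) < \<tau>"
    using w by (simp add: dist_norm)
  ultimately have "w $ idxN1 > 0"
    by linarith
  then show "w \<in> piN_plus"
    using w by (simp add: piN_plus_def)
qed

lemma lip_chart_ge_one:
  assumes "lip_chart r L K x \<Phi>" "r > 0" "L > 0"
  shows "1 \<le> L"
proof -
  define z where "z = x + (r/2) *\<^sub>R axis undefined 1"
  have "dist x z = r/2"
    using \<open>r > 0\<close> by (simp add: z_def dist_norm)
  then have "x \<in> ball x r" "z \<in> ball x r" "x \<noteq> z"
    using \<open>r > 0\<close> by auto
  moreover have "bilipschitz_on L (ball x r) \<Phi>"
    using assms(1) by (simp add: lip_chart_iff)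
  ultimately show ?thesis
    using bilipschitz_on_ge_one \<open>L > 0\<close> by blast
qed

lemma bilipschitz_ball_subset_image:
  fixes \<Psi> :: "'a::euclidean_space \<Rightarrow> 'a"
  assumes "bilipschitz_on L (ball q r) \<Psi>" "L > 0" "r > 0"
  shows "ball (\<Psi> q) (r / L) \<subseteq> \<Psi> ` ball q r"
proof -
  have "UNIV \<inter> ball (\<Psi> q) (r / L) \<subseteq> \<Psi> ` (UNIV \<inter> ball q r)"
    by (rule subspace_ball_subset_co_lipschitz_image[OF subspace_UNIV _ \<open>r > 0\<close> \<open>L > 0\<close>])
      (use bilipschitz_onD_lower[OF assms(1,2)] bilipschitz_on_continuous_on[OF assms(1,2)] in auto)
  then show ?thesis
    by simp
qed

lemma bilipschitz_flat_patch_image_contains_ball: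
  fixes f :: "(real,'n::{finite,linorder}) vec \<Rightarrow> (real,'n) vec"
  assumes f: "bilipschitz_on M (piN \<inter> ball c t) f" "f ` (piN \<inter> ball c t) \<subseteq> piN"
    and "c \<in> piN" "M > 0" "t > 0" and p: "dist (f c) p < t / (2 * M)"
  shows "piN \<inter> ball p (t / (2 * M)) \<subseteq> f ` (piN \<inter> ball c t)"
proof
  fix w assume w: "w \<in> piN \<inter> ball p (t / (2 * M))"
  have "dist (f c) w \<le> dist (f c) p + dist p w"
    by (rule dist_triangle)
  also have "\<dots> < t / M"
    using p w by (simp add: field_simps)
  finally have "w \<in> piN \<inter> ball (f c) (t / M)"
    using w by simp
  moreover have "piN \<inter> ball (f c) (t / M) \<subseteq> f ` (piN \<inter> ball c t)"
    by (rule subspace_ball_subset_co_lipschitz_image[OF subspace_piN \<open>c \<in> piN\<close> \<open>t > 0\<close> \<open>M > 0\<close> f(2)])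
      (use bilipschitz_onD_lower[OF f(1) \<open>M > 0\<close>] bilipschitz_on_continuous_on[OF f(1) \<open>M > 0\<close>] in auto)
  ultimately show "w \<in> f ` (piN \<inter> ball c t)"
    by blast
qed

lemma chart_image_contains_flat_ball:
  fixes \<gamma> \<Phi> :: "(real,'n::{finite,linorder}) vec \<Rightarrow> (real,'n) vec"
  assumes \<Phi>: "bilipschitz_on L (ball q r) \<Phi>" "\<Phi> q = 0" "\<Phi> ` (H \<inter> ball q r) \<subseteq> piN"
    and \<gamma>: "bilipschitz_on L (piN \<inter> ball c t) \<gamma>" "\<gamma> ` (piN \<inter> ball c t) \<subseteq> H \<inter> ball q r"
    and "c \<in> piN" "L > 0" "t > 0" and dq: "dist (\<gamma> c) q < t / (2 * L^3)"
  shows "piN \<inter> ball 0 (t / (2 * (L * L))) \<subseteq> \<Phi> ` (H \<inter> ball q r)"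
proof -
  have "c \<in> piN \<inter> ball c t"
    using \<open>c \<in> piN\<close> \<open>t > 0\<close> by simp
  then have "\<gamma> c \<in> ball q r"
    using \<gamma>(2) by blast
  moreover have "q \<in> ball q r"
    using \<open>\<gamma> c \<in> ball q r\<close> zero_le_dist[of q "\<gamma> c"] by (simp del: zero_le_dist)
  ultimately have "dist (\<Phi> (\<gamma> c)) (\<Phi> q) \<le> L * dist (\<gamma> c) q"
    by (rule bilipschitz_onD[OF \<Phi>(1)])
  also have "\<dots> < L * (t / (2 * L^3))"
    by (rule mult_strict_left_mono[OF dq \<open>L > 0\<close>])
  also have "\<dots> = t / (2 * (L * L))"
    using \<open>L > 0\<close> by (simp add: power3_eq_cube field_simps)
  finally have dist_0: "dist ((\<Phi> \<circ> \<gamma>) c) 0 < t / (2 * (L * L))"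
    using \<Phi>(2) by simp
  have image_sub: "(\<Phi> \<circ> \<gamma>) ` (piN \<inter> ball c t) \<subseteq> \<Phi> ` (H \<inter> ball q r)"
    using \<gamma>(2) by (auto simp: image_comp[symmetric])
  have "bilipschitz_on (L * L) (piN \<inter> ball c t) (\<Phi> \<circ> \<gamma>)"
    using \<gamma>(2) by (intro bilipschitz_on_compose[OF \<gamma>(1) \<Phi>(1)] \<open>L > 0\<close>) auto
  moreover have "(\<Phi> \<circ> \<gamma>) ` (piN \<inter> ball c t) \<subseteq> piN"
    using image_sub \<Phi>(3) by blast
  ultimately have "piN \<inter> ball 0 (t / (2 * (L * L))) \<subseteq> (\<Phi> \<circ> \<gamma>) ` (piN \<inter> ball c t)"
    by (rule bilipschitz_flat_patch_image_contains_ball[where f = "\<Phi> \<circ> \<gamma>", OF _ _ \<open>c \<in> piN\<close>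
          mult_pos_pos[OF \<open>L > 0\<close> \<open>L > 0\<close>] \<open>t > 0\<close> dist_0])
  then show ?thesis
    using image_sub by blast
qed

lemma bilipschitz_on_image_ball_subset:
  assumes "bilipschitz_on L U f" "L > 0" "c \<in> U"
  shows "f ` (U \<inter> ball c \<rho>) \<subseteq> ball (f c) (L * \<rho>)"
proof
  fix y assume "y \<in> f ` (U \<inter> ball c \<rho>)"
  then obtain u where u: "u \<in> U" "dist c u < \<rho>" "y = f u"
    by auto
  have "dist (f c) (f u) \<le> L * dist c u"
    by (rule bilipschitz_onD[OF assms(1,3) u(1)])
  also have "\<dots> < L * \<rho>"
    using u(2) \<open>L > 0\<close> by simp
  finally show "y \<in> ball (f c) (L * \<rho>)"
    using u(3) by simp
qed

text \<open>A chart at a boundary point q closer than this would map the patch onto a neighbourhood of 0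
  in \<open>piN\<close>, making q an interior point.\<close>
lemma bdry_far_from_flat_patch:
  fixes \<gamma> :: "(real,'n::{finite,linorder}) vec \<Rightarrow> (real,'n) vec"
  assumes H: "lip_hypersurface \<Omega> r L H" and "L \<ge> 1" "\<tau> > 0" "\<tau> \<le> r / (8 * L)"
    and c: "c \<in> piN"
    and \<gamma>: "bilipschitz_on L (piN \<inter> ball c \<tau>) \<gamma>" "\<gamma> ` (piN \<inter> ball c \<tau>) \<subseteq> H"
    and q: "q \<in> bdry r L H"
  shows "\<tau> / (4 * L^3) \<le> dist (\<gamma> c) q"
proof (rule ccontr)
  assume "\<not> ?thesis"
  then have dq: "dist (\<gamma> c) q < (\<tau> / 2) / (2 * L^3)"
    by simp
  have "q \<in> H"
    using q by (simp add: bdry_def)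
  then obtain \<Phi> where chart: "lip_chart r L H q \<Phi>"
    using H by (auto simp: lip_hypersurface_def)
  then have \<Phi>: "bilipschitz_on L (ball q r) \<Phi>" "\<Phi> q = 0" "\<Phi> ` (H \<inter> ball q r) \<subseteq> piN"
    by (simp_all add: lip_chart_iff)
  have L: "L > 0" "1 \<le> L^3"
    using \<open>L \<ge> 1\<close> by (simp_all add: one_le_power)
  have "L * \<tau> \<le> r / 8" "\<tau> \<le> L * \<tau>" "(\<tau> / 2) / (2 * L^3) \<le> \<tau> / 4" "L * (\<tau> / 2) = L * \<tau> / 2"
    using \<open>\<tau> \<le> r / (8 * L)\<close> \<open>\<tau> > 0\<close> \<open>L \<ge> 1\<close> L by (simp_all add: field_simps)
  then have "dist (\<gamma> c) q + L * (\<tau> / 2) \<le> r"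
    using dq \<open>\<tau> > 0\<close> by linarith
  have P_eq: "piN \<inter> ball c (\<tau> / 2) = (piN \<inter> ball c \<tau>) \<inter> ball c (\<tau> / 2)"
    using \<open>\<tau> > 0\<close> by auto
  have "c \<in> piN \<inter> ball c \<tau>"
    using c \<open>\<tau> > 0\<close> by simp
  then have "\<gamma> ` (piN \<inter> ball c (\<tau> / 2)) \<subseteq> ball (\<gamma> c) (L * (\<tau> / 2))"
    unfolding P_eq by (rule bilipschitz_on_image_ball_subset[OF \<gamma>(1) L(1)])
  also have "\<dots> \<subseteq> ball q r"
    using \<open>dist (\<gamma> c) q + L * (\<tau> / 2) \<le> r\<close> by (metis ball_subset_ball_iff)
  finally have patch: "\<gamma> ` (piN \<inter> ball c (\<tau> / 2)) \<subseteq> H \<inter> ball q r"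
    using \<gamma>(2) P_eq by blast
  have "bilipschitz_on L (piN \<inter> ball c (\<tau> / 2)) \<gamma>"
    using bilipschitz_on_subset[OF \<gamma>(1)] P_eq by blast
  then have "piN \<inter> ball 0 ((\<tau> / 2) / (2 * (L * L))) \<subseteq> \<Phi> ` (H \<inter> ball q r)"
    by (rule chart_image_contains_flat_ball[OF \<Phi> _ patch c L(1) _ dq]) (use \<open>\<tau> > 0\<close> in simp)
  then have "ball 0 ((\<tau> / 2) / (2 * (L * L))) \<inter> piN \<subseteq> \<Phi> ` (H \<inter> ball q r)"
    by (simp add: Int_commute)
  moreover have "(\<tau> / 2) / (2 * (L * L)) > 0"
    using \<open>\<tau> > 0\<close> L by simp
  ultimately have "interior_pt r L H q"
    unfolding interior_pt_def using chart by blast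
  then show False
    using q by (simp add: bdry_def)
qed

lemma bilipschitz_on_inv_into_subset:
  assumes f: "bilipschitz_on L U f" and "L > 0" and P: "P \<subseteq> f ` (H \<inter> U)"
  shows "bilipschitz_on L P (inv_into U f)" "inv_into U f ` P \<subseteq> H \<inter> U"
proof -
  have "P \<subseteq> f ` U"
    using P by blast
  then show "bilipschitz_on L P (inv_into U f)"
    by (rule bilipschitz_on_subset[OF bilipschitz_on_inv_into[OF f \<open>L > 0\<close>]])
  show "inv_into U f ` P \<subseteq> H \<inter> U"
  proof
    fix h assume "h \<in> inv_into U f ` P"
    then obtain u where "u \<in> H \<inter> U" "h = inv_into U f (f u)"
      using P by blast
    then show "h \<in> H \<inter> U"
      using bilipschitz_on_inj_on[OF f \<open>L > 0\<close>] by simp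
  qed
qed

lemma MR_chart_image_contains_flat_disc:
  fixes \<Psi> :: "(real,'n::{finite,linorder}) vec \<Rightarrow> (real,'n) vec"
  assumes \<Psi>: "bilipschitz_on L (ball q r) \<Psi>" "\<Psi> q = 0"
    and half: "\<Psi> ` (H \<inter> ball q r) = \<Psi> ` ball q r \<inter> piN_plus"
    and "L > 0" "\<tau> > 0" "2 * \<tau> \<le> r / L"
  shows "piN \<inter> ball (\<tau> *\<^sub>R axis idxN1 1) \<tau> \<subseteq> \<Psi> ` (H \<inter> ball q r)"
proof -
  define c :: "(real,'n) vec" where "c = \<tau> *\<^sub>R axis idxN1 1"
  have "0 < r / L"
    using \<open>\<tau> > 0\<close> \<open>2 * \<tau> \<le> r / L\<close> by linarith
  then have "r > 0"
    using \<open>L > 0\<close> by (simp add: zero_less_divide_iff)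
  have "piN \<inter> ball c \<tau> \<subseteq> \<Psi> ` (H \<inter> ball q r)"
  proof
    fix w assume w: "w \<in> piN \<inter> ball c \<tau>"
    have "norm w \<le> norm c + norm (w - c)"
      by (rule norm_triangle_sub)
    also have "\<dots> < r / L"
      using w \<open>\<tau> > 0\<close> \<open>2 * \<tau> \<le> r / L\<close> by (simp add: c_def dist_norm norm_minus_commute)
    finally have "w \<in> \<Psi> ` ball q r"
      using bilipschitz_ball_subset_image[OF \<Psi>(1) \<open>L > 0\<close> \<open>r > 0\<close>] \<Psi>(2) by auto
    moreover have "w \<in> piN_plus"
      using w piN_ball_axis_subset_piN_plus unfolding c_def by blast
    ultimately show "w \<in> \<Psi> ` (H \<inter> ball q r)"
      using half by blast
  qed
  then show ?thesis
    by (simp add: c_def)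
qed

text \<open>The flat disc of radius \<open>\<tau>\<close> centred at \<open>\<tau> e\<^sub>N\<^sub>-\<^sub>1\<close> lies in the half-disc image of H under the
  chart at q, so it pulls back to a bi-Lipschitz patch of H.\<close>
lemma MR_bdry_point_near_point_far_from_bdry:
  fixes H :: "(real,'n::{finite,linorder}) vec set"
  assumes "CARD('n) \<ge> 2" and MR: "MR \<Omega> r L H" and "L \<ge> 1" "s > 0" "s \<le> r / 2"
    and q: "q \<in> bdry r L H"
  shows "\<exists>y\<in>H. dist y q \<le> s / 4 \<and> (\<forall>q'\<in>bdry r L H. s / (16 * L^4) \<le> dist y q')"
proof -
  have L: "L > 0" and "r > 0"
    using \<open>L \<ge> 1\<close> \<open>s > 0\<close> \<open>s \<le> r / 2\<close> by simp_all
  obtain \<Psi> :: "(real,'n) vec \<Rightarrow> (real,'n) vec" where chart: "lip_chart r L H q \<Psi>"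
    and half: "\<Psi> ` (H \<inter> ball q r) = \<Psi> ` ball q r \<inter> piN_plus"
    using MR q unfolding MR_def by blast
  then have \<Psi>: "bilipschitz_on L (ball q r) \<Psi>" "\<Psi> q = 0"
    by (simp_all add: lip_chart_iff)
  define \<tau> where "\<tau> = s / (4 * L)"
  define c :: "(real,'n) vec" where "c = \<tau> *\<^sub>R axis idxN1 1"
  define \<gamma> where "\<gamma> = inv_into (ball q r) \<Psi>"
  have \<tau>: "\<tau> > 0" "\<tau> \<le> r / (8 * L)" "2 * \<tau> \<le> r / L"
    using \<open>s > 0\<close> \<open>s \<le> r / 2\<close> L by (simp_all add: \<tau>_def field_simps)
  have "c \<in> piN"
    unfolding c_def by (rule subspace_scale[OF subspace_piN axis_idxN1_in_piN[OF \<open>CARD('n) \<ge> 2\<close>]])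
  have "norm c = \<tau>" "c \<in> piN \<inter> ball c \<tau>"
    using \<tau> \<open>c \<in> piN\<close> by (simp_all add: c_def)
  have disc: "piN \<inter> ball c \<tau> \<subseteq> \<Psi> ` (H \<inter> ball q r)"
    unfolding c_def by (rule MR_chart_image_contains_flat_disc[OF \<Psi> half L \<tau>(1,3)])
  have \<gamma>: "bilipschitz_on L (piN \<inter> ball c \<tau>) \<gamma>" "\<gamma> ` (piN \<inter> ball c \<tau>) \<subseteq> H \<inter> ball q r"
    unfolding \<gamma>_def by (rule bilipschitz_on_inv_into_subset[OF \<Psi>(1) L disc])+
  have far: "\<tau> / (4 * L^3) \<le> dist (\<gamma> c) q'" if "q' \<in> bdry r L H" for q'
    using bdry_far_from_flat_patch[OF _ \<open>L \<ge> 1\<close> \<tau>(1,2) \<open>c \<in> piN\<close> \<gamma>(1)] \<gamma>(2) MR that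
    unfolding MR_def by blast
  have "\<Psi> (\<gamma> c) = c"
    using disc \<open>c \<in> piN \<inter> ball c \<tau>\<close> by (auto simp: \<gamma>_def f_inv_into_f)
  have "\<gamma> c \<in> ball q r"
    using \<gamma>(2) \<open>c \<in> piN \<inter> ball c \<tau>\<close> by blast
  moreover have "q \<in> ball q r"
    using \<open>r > 0\<close> by simp
  ultimately have "dist (\<gamma> c) q \<le> L * dist (\<Psi> (\<gamma> c)) (\<Psi> q)"
    by (rule bilipschitz_onD_lower[OF \<Psi>(1) L])
  also have "\<dots> = s / 4"
    using \<open>\<Psi> (\<gamma> c) = c\<close> \<Psi>(2) \<open>norm c = \<tau>\<close> L by (simp add: \<tau>_def)
  finally show ?thesis
    using far \<gamma>(2) \<open>c \<in> piN \<inter> ball c \<tau>\<close> L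
    by (intro bexI[of _ "\<gamma> c"]) (auto simp: \<tau>_def power_def field_simps)
qed

lemma MR_exists_nearby_point_far_from_bdry:
  fixes H :: "(real,'n::{finite,linorder}) vec set"
  assumes "CARD('n) \<ge> 2" "MR \<Omega> r L H" "L \<ge> 1" "s > 0" "s \<le> r / 2"
    and B: "\<forall>q\<in>B. s \<le> dist y q"
  shows "\<exists>y'\<in>insert y H. dist y y' \<le> 3/4 * s \<and> (\<forall>q\<in>B \<union> bdry r L H. s / (16 * L^4) \<le> dist y' q)"
proof -
  have "1 \<le> L^4"
    using \<open>L \<ge> 1\<close> by (rule one_le_power)
  have "s / (16 * L^4) \<le> s / 4"
    by (rule frac_le) (use \<open>s > 0\<close> \<open>1 \<le> L^4\<close> in linarith)+
  obtain y' where y': "y' \<in> insert y H" "dist y y' \<le> 3/4 * s"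
    and far: "\<forall>q\<in>bdry r L H. s / (16 * L^4) \<le> dist y' q"
  proof (cases "\<exists>q\<in>bdry r L H. dist y q < s / 2")
    case True
    then obtain q where q: "q \<in> bdry r L H" "dist y q < s / 2"
      by blast
    then obtain y' where "y' \<in> H" "dist y' q \<le> s / 4" "\<forall>q'\<in>bdry r L H. s / (16 * L^4) \<le> dist y' q'"
      using MR_bdry_point_near_point_far_from_bdry assms by blast
    moreover have "dist y y' \<le> 3/4 * s"
      using dist_triangle[of y y' q] q(2) \<open>dist y' q \<le> s / 4\<close> by (simp add: dist_commute)
    ultimately show ?thesis
      using that by blast
  next
    case False
    then have "\<forall>q\<in>bdry r L H. s / (16 * L^4) \<le> dist y q"
      using \<open>s / (16 * L^4) \<le> s / 4\<close> \<open>s > 0\<close> by (auto simp: not_less)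
    then show ?thesis
      using that[of y] \<open>s > 0\<close> by simp
  qed
  have "s / (16 * L^4) \<le> dist y' q" if "q \<in> B" for q
  proof -
    have "s \<le> dist y q"
      using B that by blast
    then show ?thesis
      using dist_triangle[of y q y'] y'(2) \<open>s / (16 * L^4) \<le> s / 4\<close> by linarith
  qed
  then show ?thesis
    using y' far by blast
qed

text \<open>The pieces are treated one at a time at geometrically decreasing scales; a move at scale s
  keeps the distance \<open>s/4\<close> to the boundaries treated before.\<close>
lemma MR_pieces_exists_point_far_from_bdry:
  fixes K :: "(real,'n::{finite,linorder}) vec set"
  assumes "CARD('n) \<ge> 2" "finite F" "\<forall>H\<in>F. MR \<Omega> r L H \<and> H \<subseteq> K"
    and "L \<ge> 1" "s\<^sub>0 > 0" "s\<^sub>0 \<le> r / 2" "x \<in> K"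
  shows "\<exists>y\<in>K. dist x y \<le> real (card F) * s\<^sub>0 \<and>
           (\<forall>H\<in>F. \<forall>q\<in>bdry r L H. s\<^sub>0 / (16 * L^4) ^ card F \<le> dist y q)"
  using assms(2,3)
proof (induction F rule: finite_induct)
  case empty
  then show ?case
    using \<open>x \<in> K\<close> by auto
next
  case (insert H' F)
  obtain y where y: "y \<in> K" "dist x y \<le> real (card F) * s\<^sub>0"
    and far: "\<forall>H\<in>F. \<forall>q\<in>bdry r L H. s\<^sub>0 / (16 * L^4) ^ card F \<le> dist y q"
    using insert by auto
  define s where "s = s\<^sub>0 / (16 * L^4) ^ card F"
  have "1 \<le> (16 * L^4) ^ card F"
    using one_le_power[OF \<open>L \<ge> 1\<close>, of 4] by (intro one_le_power) linarith
  then have s: "s > 0" "s \<le> s\<^sub>0"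
    using \<open>s\<^sub>0 > 0\<close> divide_left_mono[of 1 "(16 * L^4) ^ card F" s\<^sub>0] by (simp_all add: s_def)
  have "MR \<Omega> r L H'" "H' \<subseteq> K"
    using insert.prems by auto
  moreover have "s \<le> r / 2"
    using s \<open>s\<^sub>0 \<le> r / 2\<close> by linarith
  moreover have "\<forall>q\<in>(\<Union>H\<in>F. bdry r L H). s \<le> dist y q"
    using far unfolding s_def by blast
  ultimately obtain y' where "y' \<in> insert y H'" and y': "dist y y' \<le> 3/4 * s"
    and far': "\<forall>q\<in>(\<Union>H\<in>F. bdry r L H) \<union> bdry r L H'. s / (16 * L^4) \<le> dist y' q"
    using MR_exists_nearby_point_far_from_bdry[OF \<open>CARD('n) \<ge> 2\<close> _ \<open>L \<ge> 1\<close> s(1)] by metis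
  have "y' \<in> K"
    using \<open>y' \<in> insert y H'\<close> y(1) \<open>H' \<subseteq> K\<close> by blast
  moreover have "dist x y' \<le> real (card (insert H' F)) * s\<^sub>0"
    using dist_triangle[of x y' y] y(2) y' s insert.hyps by (simp add: algebra_simps)
  moreover have "s\<^sub>0 / (16 * L^4) ^ card (insert H' F) = s / (16 * L^4)"
    using insert.hyps by (simp add: s_def power_Suc2 divide_divide_eq_left)
  ultimately show ?case
    using far' by (intro bexI[of _ y']) auto
qed

lemma FR_exists_point_far_from_sing_at_scale:
  fixes x :: "(real,'n::{finite,linorder}) vec"
  assumes "CARD('n) \<ge> 2" and FR: "FR \<Omega> r L M0 Hs" and x: "x \<in> \<Union>(set Hs)"
    and "r > 0" "L > 0" "s\<^sub>0 > 0" "s\<^sub>0 \<le> r / 2"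
  shows "\<exists>y\<in>\<Union>(set Hs). dist x y \<le> real M0 * s\<^sub>0 \<and> (\<forall>z\<in>sing_FR r L Hs. s\<^sub>0 / (16 * L^4) ^ M0 \<le> dist y z)"
proof -
  have MR: "\<forall>H\<in>set Hs. MR \<Omega> r L H" and "card (set Hs) \<le> M0"
    using FR card_length[of Hs] by (auto simp: FR_def)
  obtain H where "H \<in> set Hs" "x \<in> H"
    using x by blast
  moreover have "lip_hypersurface \<Omega> r L H"
    using MR \<open>H \<in> set Hs\<close> by (simp add: MR_def)
  ultimately obtain \<Phi> where "lip_chart r L H x \<Phi>"
    unfolding lip_hypersurface_def by blast
  then have "L \<ge> 1"
    using lip_chart_ge_one \<open>r > 0\<close> \<open>L > 0\<close> by blast
  then have "1 \<le> 16 * L^4"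
    using one_le_power[of L 4] by linarith
  then have "s\<^sub>0 / (16 * L^4) ^ M0 \<le> s\<^sub>0 / (16 * L^4) ^ card (set Hs)"
    using \<open>card (set Hs) \<le> M0\<close> \<open>s\<^sub>0 > 0\<close> \<open>L > 0\<close> by (intro divide_left_mono power_increasing) auto
  have "\<forall>H\<in>set Hs. MR \<Omega> r L H \<and> H \<subseteq> \<Union>(set Hs)"
    using MR by blast
  then obtain y where "y \<in> \<Union>(set Hs)" "dist x y \<le> real (card (set Hs)) * s\<^sub>0"
    and far: "\<forall>H\<in>set Hs. \<forall>q\<in>bdry r L H. s\<^sub>0 / (16 * L^4) ^ card (set Hs) \<le> dist y q"
    using MR_pieces_exists_point_far_from_bdry[OF assms(1) List.finite_set _ \<open>L \<ge> 1\<close> assms(6,7) x]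
    by blast
  moreover have "real (card (set Hs)) * s\<^sub>0 \<le> real M0 * s\<^sub>0"
    using \<open>card (set Hs) \<le> M0\<close> \<open>s\<^sub>0 > 0\<close> by (intro mult_right_mono) auto
  moreover have "\<forall>z\<in>sing_FR r L Hs. s\<^sub>0 / (16 * L^4) ^ M0 \<le> dist y z"
    using far \<open>s\<^sub>0 / (16 * L^4) ^ M0 \<le> s\<^sub>0 / (16 * L^4) ^ card (set Hs)\<close>
    by (fastforce simp: sing_FR_def)
  ultimately show ?thesis
    by (intro bexI[of _ y]) auto
qed

lemma FR_exists_point_far_from_sing:
  assumes "CARD('n::{finite,linorder}) \<ge> 2" "r > 0" "L > 0" "rb > 0"
  shows "\<exists>\<delta>>0. \<forall>(\<Omega>::(real,'n) vec set) Hs x. FR \<Omega> r L M0 Hs \<and> x \<in> \<Union>(set Hs) \<longrightarrow>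
           (\<exists>y\<in>\<Union>(set Hs). dist x y < rb / 2 \<and> (\<forall>z\<in>sing_FR r L Hs. \<delta> \<le> dist y z))"
proof -
  define s\<^sub>0 where "s\<^sub>0 = min (r / 2) (rb / (2 * (real M0 + 1)))"
  have "s\<^sub>0 \<le> r / 2"
    unfolding s\<^sub>0_def by (rule min.cobounded1)
  moreover have "s\<^sub>0 > 0"
    using assms by (simp add: s\<^sub>0_def)
  ultimately have s\<^sub>0: "s\<^sub>0 > 0" "s\<^sub>0 \<le> r / 2"
    by simp_all
  have "real M0 * s\<^sub>0 \<le> real M0 * (rb / (2 * (real M0 + 1)))"
    unfolding s\<^sub>0_def by (intro mult_left_mono min.cobounded2) simp
  also have "\<dots> < rb / 2"
    using \<open>rb > 0\<close> by (simp add: field_simps)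
  finally have "real M0 * s\<^sub>0 < rb / 2" .
  then have "\<exists>y\<in>\<Union>(set Hs). dist x y < rb / 2 \<and> (\<forall>z\<in>sing_FR r L Hs. s\<^sub>0 / (16 * L^4) ^ M0 \<le> dist y z)"
    if "FR \<Omega> r L M0 Hs" "x \<in> \<Union>(set Hs)" for \<Omega> :: "(real,'n) vec set" and Hs x
    using FR_exists_point_far_from_sing_at_scale[OF assms(1) that \<open>r > 0\<close> \<open>L > 0\<close> s\<^sub>0]
    by (meson le_less_trans)
  moreover have "s\<^sub>0 / (16 * L^4) ^ M0 > 0"
    using s\<^sub>0 \<open>L > 0\<close> by simp
  ultimately show ?thesis
    by blast
qed

lemma sing_FR_subset: "sing_FR r L Hs \<subseteq> \<Union>(set Hs)"
  by (auto simp: sing_FR_def bdry_def)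

lemma FR_omega_far_from_sing_K:
  assumes D: "FR_omega \<Omega> r L M0 \<omega> D" and i: "i < length D" and y: "y \<in> \<Union>(set (D ! i))"
    and "\<delta> > 0" and far: "\<forall>z\<in>sing_FR r L (D ! i). \<delta> \<le> dist y z"
  shows "\<forall>z\<in>sing_K r L D. min \<delta> (\<omega> \<delta>) \<le> dist y z"
proof
  fix z assume "z \<in> sing_K r L D"
  then obtain j where j: "j < length D" "z \<in> sing_FR r L (D ! j)"
    by (auto simp: sing_K_def in_set_conv_nth)
  show "min \<delta> (\<omega> \<delta>) \<le> dist y z"
  proof (cases "j = i")
    case True
    then show ?thesis
      using far j by auto
  next
    case False
    have "z \<in> \<Union>(set (D ! j))"
      using j sing_FR_subset by blast
    then have "\<omega> \<delta> \<le> dist y z"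
      using D i y \<open>\<delta> > 0\<close> far j(1) False unfolding FR_omega_def by blast
    then show ?thesis
      by simp
  qed
qed

lemma in_K_of_iff: "x \<in> K_of D \<longleftrightarrow> (\<exists>i<length D. x \<in> \<Union>(set (D ! i)))"
proof
  assume "x \<in> K_of D"
  then obtain Hs where "Hs \<in> set D" "x \<in> \<Union>(set Hs)"
    by (auto simp: K_of_def)
  then show "\<exists>i<length D. x \<in> \<Union>(set (D ! i))"
    by (metis in_set_conv_nth)
next
  assume "\<exists>i<length D. x \<in> \<Union>(set (D ! i))"
  then show "x \<in> K_of D"
    unfolding K_of_def using nth_mem by blast
qed

theorem lemma3p9:
  fixes r L rb :: real and M0 :: nat and \<omega> :: "real \<Rightarrow> real"
  assumes "CARD('n::{finite,linorder}) \<ge> 2"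
    and "r > 0" and "L > 0" and "modulus_of_continuity \<omega>" and "rb > 0"
  shows "\<exists>sb>0. \<forall>(\<Omega>::(real,'n) vec set) D.
           bounded \<Omega> \<and> open \<Omega> \<and> FR_omega \<Omega> r L M0 \<omega> D \<longrightarrow>
           (\<forall>x\<in>K_of D. \<exists>y\<in>ball x (rb/2) \<inter> K_of D.
               \<forall>z\<in>sing_K r L D. sb \<le> dist y z)"
proof -
  obtain \<delta> where "\<delta> > 0" and \<delta>: "\<And>(\<Omega>::(real,'n) vec set) Hs x. FR \<Omega> r L M0 Hs \<Longrightarrow> x \<in> \<Union>(set Hs) \<Longrightarrow>
      \<exists>y\<in>\<Union>(set Hs). dist x y < rb / 2 \<and> (\<forall>z\<in>sing_FR r L Hs. \<delta> \<le> dist y z)"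
    using FR_exists_point_far_from_sing[OF assms(1,2,3,5)] by blast
  have "min \<delta> (\<omega> \<delta>) > 0"
    using \<open>\<delta> > 0\<close> \<open>modulus_of_continuity \<omega>\<close> by (simp add: modulus_of_continuity_def)
  moreover have "\<exists>y\<in>ball x (rb/2) \<inter> K_of D. \<forall>z\<in>sing_K r L D. min \<delta> (\<omega> \<delta>) \<le> dist y z"
    if D: "FR_omega \<Omega> r L M0 \<omega> D" and x: "x \<in> K_of D" for \<Omega> :: "(real,'n) vec set" and D x
  proof -
    obtain i where i: "i < length D" "x \<in> \<Union>(set (D ! i))"
      using x in_K_of_iff by blast
    then have "FR \<Omega> r L M0 (D ! i)"
      using D by (simp add: FR_omega_def)
    then obtain y where "y \<in> \<Union>(set (D ! i))" "dist x y < rb / 2"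
      and "\<forall>z\<in>sing_FR r L (D ! i). \<delta> \<le> dist y z"
      using \<delta> i(2) by blast
    moreover have "y \<in> K_of D"
      using \<open>y \<in> \<Union>(set (D ! i))\<close> i(1) in_K_of_iff by blast
    ultimately show ?thesis
      using FR_omega_far_from_sing_K[OF D i(1)] \<open>\<delta> > 0\<close> by (intro bexI[of _ y]) auto
  qed
  ultimately show ?thesis
    by blast
qed

end
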